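(* Let $\mathbf G$ be a strict quasi-covering of $\mathbf H$ of radius $r$ via $\gamma$ (with associated covering $\mathbf K$ via $\delta$ and centres $z\in V(G)$, $z_0\in V(K)$). For every $q\in\mathbb N$, if $r\ge q\,|V(H)|$ then the quasi-covering has at least $q$ sheets.
   Context: Graphs are simple, undirected, connected, labelled; $\mathbf H$ is finite. $B_G(v,r)$ is the ball of radius $r$, $B_G(v)=B_G(v,1)$. $\mathbf K$ is a covering of $\mathbf H$ via $\delta$ if $\delta$ is a surjective label-preserving homomorphism whose restriction to each $B_K(v)$ is a bijection onto $B_H(\delta(v))$. $\mathbf G$ is a quasi-covering of $\mathbf H$ of radius $r$ via a partial map $\gamma:V(G)\to V(H)$ if there exist a finite or infinite covering $\mathbf K$ of $\mathbf H$ via $\delta$ (the associated covering) and vertices $z_0\in V(K)$, $z\in V(G)$ (the centre) such that $B_{\mathbf G}(z,r)$ is isomorphic via some $\varphi$ to $B_{\mathbf K}(z_0,r)$, $\gamma$ is defined on $B_G(z,r)$, and $\gamma=\delta\circ\varphi$ on $V(B_G(z,r))$. It is strict if $B_{\mathbf G}(z,r-1)\neq\mathbf G$. Its number of sheets is $\min_{v\in V(H)}\left|\{w\in\delta^{-1}(v)\mid B_K(w,1)\subseteq B_K(z_0,r)\}\right|$. *)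

theory Defs
  imports Main
begin

record ('a, 'l) lgraph =
  verts :: "'a set"
  adj :: "'a \<Rightarrow> 'a \<Rightarrow> bool"
  lab :: "'a \<Rightarrow> 'l"

definition walk :: "('a, 'l) lgraph \<Rightarrow> 'a list \<Rightarrow> bool" where
  "walk G xs \<longleftrightarrow> xs \<noteq> [] \<and> set xs \<subseteq> verts G \<and>
     (\<forall>i. Suc i < length xs \<longrightarrow> adj G (xs ! i) (xs ! Suc i))"

definition reach_within :: "('a, 'l) lgraph \<Rightarrow> 'a \<Rightarrow> 'a \<Rightarrow> nat \<Rightarrow> bool" where
  "reach_within G v w n \<longleftrightarrow>
     (\<exists>xs. walk G xs \<and> hd xs = v \<and> last xs = w \<and> length xs \<le> Suc n)"

definition wf_graph :: "('a, 'l) lgraph \<Rightarrow> bool" where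
  "wf_graph G \<longleftrightarrow> verts G \<noteq> {} \<and>
     (\<forall>x y. adj G x y \<longrightarrow> x \<in> verts G \<and> y \<in> verts G) \<and>
     (\<forall>x y. adj G x y \<longrightarrow> adj G y x) \<and>
     (\<forall>x. \<not> adj G x x) \<and>
     (\<forall>x\<in>verts G. \<forall>y\<in>verts G. \<exists>n. reach_within G x y n)"

definition ball_verts :: "('a, 'l) lgraph \<Rightarrow> 'a \<Rightarrow> nat \<Rightarrow> 'a set" where
  "ball_verts G v r = {w. reach_within G v w r}"

definition ball :: "('a, 'l) lgraph \<Rightarrow> 'a \<Rightarrow> nat \<Rightarrow> ('a, 'l) lgraph" where
  "ball G v r = \<lparr> verts = ball_verts G v r,
     adj = (\<lambda>x y. x \<in> ball_verts G v r \<and> y \<in> ball_verts G v r \<and> adj G x y),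
     lab = lab G \<rparr>"

definition graph_iso :: "('a \<Rightarrow> 'b) \<Rightarrow> ('a, 'l) lgraph \<Rightarrow> ('b, 'l) lgraph \<Rightarrow> bool" where
  "graph_iso \<phi> A B \<longleftrightarrow> bij_betw \<phi> (verts A) (verts B) \<and>
     (\<forall>x\<in>verts A. \<forall>y\<in>verts A. adj A x y \<longleftrightarrow> adj B (\<phi> x) (\<phi> y)) \<and>
     (\<forall>x\<in>verts A. lab B (\<phi> x) = lab A x)"

definition covering :: "('b, 'l) lgraph \<Rightarrow> ('c, 'l) lgraph \<Rightarrow> ('b \<Rightarrow> 'c) \<Rightarrow> bool" where
  "covering K H \<delta> \<longleftrightarrow> \<delta> ` verts K = verts H \<and>
     (\<forall>x y. adj K x y \<longrightarrow> adj H (\<delta> x) (\<delta> y)) \<and>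
     (\<forall>x\<in>verts K. lab H (\<delta> x) = lab K x) \<and>
     (\<forall>v\<in>verts K. bij_betw \<delta> (ball_verts K v 1) (ball_verts H (\<delta> v) 1))"

definition quasi_covering ::
  "('a, 'l) lgraph \<Rightarrow> ('c, 'l) lgraph \<Rightarrow> nat \<Rightarrow> ('a \<Rightarrow> 'c option) \<Rightarrow>
   ('b, 'l) lgraph \<Rightarrow> ('b \<Rightarrow> 'c) \<Rightarrow> 'a \<Rightarrow> 'b \<Rightarrow> ('a \<Rightarrow> 'b) \<Rightarrow> bool" where
  "quasi_covering G H r \<gamma> K \<delta> z z0 \<phi> \<longleftrightarrow>
     wf_graph G \<and> wf_graph H \<and> finite (verts H) \<and> wf_graph K \<and> covering K H \<delta> \<and>
     z \<in> verts G \<and> z0 \<in> verts K \<and>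
     graph_iso \<phi> (ball G z r) (ball K z0 r) \<and> \<phi> z = z0 \<and>
     (\<forall>x\<in>ball_verts G z r. \<gamma> x = Some (\<delta> (\<phi> x)))"

definition strict_qc :: "('a, 'l) lgraph \<Rightarrow> 'a \<Rightarrow> nat \<Rightarrow> bool" where
  "strict_qc G z r \<longleftrightarrow> ball G z (r - 1) \<noteq> G"

definition num_sheets ::
  "('b, 'l) lgraph \<Rightarrow> ('c, 'l) lgraph \<Rightarrow> ('b \<Rightarrow> 'c) \<Rightarrow> 'b \<Rightarrow> nat \<Rightarrow> nat" where
  "num_sheets K H \<delta> z0 r =
     Min ((\<lambda>v. card {w\<in>verts K. \<delta> w = v \<and> ball_verts K w 1 \<subseteq> ball_verts K z0 r}) ` verts H)"

end

theory Submission
  imports Defs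
begin

text \<open>Let n = |V(H)| and t = r - n. Strictness gives a vertex of G beyond distance r - 1 from z,
  so all spheres of radius 1, ..., t around z are nonempty and |B_G(z,t)| > t; the ball
  isomorphism carries B_G(z,t) injectively into B_K(z0,t). By pigeonhole some vertex u of H has
  at least (t+1)/n preimages in B_K(z0,t). Lifting an edge of H is injective on fibres and moves
  away from z0 by at most one step, and every vertex v of H is within distance n - 1 of u, so v
  has at least (t+1)/n preimages in B_K(z0,r-1), i.e. at least q of them when r \<ge> q n. Each
  such preimage has its whole 1-ball inside B_K(z0,r).\<close>

section \<open>Walks and distances\<close>

lemma walk_Cons_Cons:
  "walk G (x # y # ys) \<longleftrightarrow> x \<in> verts G \<and> adj G x y \<and> walk G (y # ys)"
  unfolding walk_def by (auto simp: less_Suc_eq_0_disj)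

lemma walk_append:
  "walk G xs \<Longrightarrow> walk G ys \<Longrightarrow> last xs = hd ys \<Longrightarrow> walk G (xs @ tl ys)"
proof (induction xs rule: induct_list012)
  case (2 x)
  then show ?case by (cases ys) auto
next
  case (3 x y zs)
  then show ?case by (simp add: walk_Cons_Cons)
qed (simp add: walk_def)

lemma walk_butlast: "walk G xs \<Longrightarrow> butlast xs \<noteq> [] \<Longrightarrow> walk G (butlast xs)"
  unfolding walk_def by (auto simp: nth_butlast dest: in_set_butlastD)

lemma reach_within_refl: "a \<in> verts G \<Longrightarrow> reach_within G a a n"
  unfolding reach_within_def by (intro exI[of _ "[a]"]) (simp add: walk_def)

lemma reach_within_adj: "adj G a b \<Longrightarrow> a \<in> verts G \<Longrightarrow> b \<in> verts G \<Longrightarrow> reach_within G a b 1"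
  unfolding reach_within_def by (intro exI[of _ "[a, b]"]) (simp add: walk_Cons_Cons walk_def)

lemma reach_within_mono: "reach_within G a b m \<Longrightarrow> m \<le> n \<Longrightarrow> reach_within G a b n"
  unfolding reach_within_def by fastforce

lemma reach_within_verts: "reach_within G a b n \<Longrightarrow> a \<in> verts G \<and> b \<in> verts G"
  unfolding reach_within_def walk_def by (metis hd_in_set last_in_set subsetD)

lemma reach_within_0: "reach_within G a b 0 \<Longrightarrow> b = a"
  unfolding reach_within_def walk_def by (auto simp: le_Suc_eq length_Suc_conv)

lemma reach_within_trans:
  assumes "reach_within G a b m" "reach_within G b c n"
  shows "reach_within G a c (m + n)"
proof -
  obtain xs where xs: "walk G xs" "hd xs = a" "last xs = b" "length xs \<le> Suc m"
    using assms(1) by (auto simp: reach_within_def)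
  obtain ys where ys: "walk G ys" "hd ys = b" "last ys = c" "length ys \<le> Suc n"
    using assms(2) by (auto simp: reach_within_def)
  have "xs \<noteq> []" "ys \<noteq> []"
    using xs ys by (auto simp: walk_def)
  moreover have "last (xs @ tl ys) = c"
    using xs ys \<open>ys \<noteq> []\<close> by (cases ys) auto
  ultimately show ?thesis
    unfolding reach_within_def using xs ys walk_append[OF xs(1) ys(1)]
    by (intro exI[of _ "xs @ tl ys"]) auto
qed

lemma reach_within_SucE:
  assumes "reach_within G a b (Suc n)"
  obtains x where "reach_within G a x n" "b = x \<or> adj G x b"
proof (cases "reach_within G a b n")
  case False
  obtain xs where xs: "walk G xs" "hd xs = a" "last xs = b" "length xs \<le> Suc (Suc n)"
    using assms by (auto simp: reach_within_def)
  with False have len: "length xs = Suc (Suc n)"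
    unfolding reach_within_def by (metis le_SucE)
  define ys where "ys = butlast xs"
  have ys: "length ys = Suc n" "xs = ys @ [b]"
    using xs(3) len unfolding ys_def by (auto intro: append_butlast_last_id[symmetric])
  have "walk G ys"
    using walk_butlast[OF xs(1)] ys(1) unfolding ys_def by fastforce
  moreover have "hd ys = a"
    using xs(2) ys by (cases ys) auto
  ultimately have "reach_within G a (last ys) n"
    unfolding reach_within_def using ys(1) by (intro exI[of _ ys]) simp
  moreover have "adj G (xs ! n) (xs ! Suc n)"
    using xs(1) len unfolding walk_def by simp
  then have "adj G (last ys) b"
    using ys by (simp add: nth_append) (metis diff_Suc_1 last_conv_nth list.size(3) nat.distinct(1))
  ultimately show ?thesis using that by blast
qed (use that in blast)

lemma reach_within_1_iff:
  "reach_within G a b (Suc 0) \<longleftrightarrow> a \<in> verts G \<and> b \<in> verts G \<and> (b = a \<or> adj G a b)"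
proof
  assume ab: "reach_within G a b (Suc 0)"
  then obtain x where x: "reach_within G a x 0" "b = x \<or> adj G x b"
    by (rule reach_within_SucE)
  moreover have "x = a"
    using x(1) by (rule reach_within_0)
  ultimately show "a \<in> verts G \<and> b \<in> verts G \<and> (b = a \<or> adj G a b)"
    using reach_within_verts[OF ab] by blast
qed (metis One_nat_def reach_within_refl reach_within_adj)

lemma reach_within_frontier:
  assumes "reach_within G z x m" "\<not> reach_within G z x i"
  shows "\<exists>y. reach_within G z y (Suc i) \<and> \<not> reach_within G z y i"
  using assms
proof (induction m arbitrary: x)
  case 0
  then show ?case
    by (metis reach_within_0 reach_within_refl reach_within_verts)
next
  case (Suc m)
  obtain p where p: "reach_within G z p m" "x = p \<or> adj G p x"
    using Suc.prems(1) by (rule reach_within_SucE)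
  show ?case
  proof (cases "reach_within G z p i")
    case True
    have "reach_within G p x 1"
      using p(2) reach_within_verts[OF Suc.prems(1)] reach_within_verts[OF p(1)]
      by (auto simp: reach_within_1_iff)
    with True have "reach_within G z x (Suc i)"
      using reach_within_trans by fastforce
    with Suc.prems(2) show ?thesis by blast
  qed (use Suc.IH[OF p(1)] in blast)
qed

section \<open>Growth of balls\<close>

lemma center_in_ball_verts: "z \<in> verts G \<Longrightarrow> z \<in> ball_verts G z n"
  by (simp add: ball_verts_def reach_within_refl)

lemma ball_verts_mono: "m \<le> n \<Longrightarrow> ball_verts G z m \<subseteq> ball_verts G z n"
  unfolding ball_verts_def by (auto intro: reach_within_mono)

lemma ball_verts_subset: "ball_verts G z n \<subseteq> verts G"
  unfolding ball_verts_def by (auto dest: reach_within_verts)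

text \<open>A vertex reachable from z but not within distance d makes all spheres of radius
  1, ..., d around z nonempty.\<close>
lemma card_ball_verts_ge:
  assumes "reach_within G z x m" "\<not> reach_within G z x d" "finite (ball_verts G z d)"
  shows "Suc d \<le> card (ball_verts G z d)"
  using assms(2,3)
proof (induction d)
  case 0
  have "z \<in> ball_verts G z 0"
    using reach_within_verts[OF assms(1)] by (simp add: center_in_ball_verts)
  then show ?case
    using "0.prems"(2) by (metis Suc_leI card_gt_0_iff empty_iff)
next
  case (Suc d)
  have sub: "ball_verts G z d \<subseteq> ball_verts G z (Suc d)"
    by (simp add: ball_verts_mono)
  have far: "\<not> reach_within G z x d"
    using Suc.prems(1) reach_within_mono[of G z x d "Suc d"] by auto
  then obtain y where "reach_within G z y (Suc d)" "\<not> reach_within G z y d"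
    using reach_within_frontier[OF assms(1)] by blast
  then have "y \<in> ball_verts G z (Suc d) - ball_verts G z d"
    by (simp add: ball_verts_def)
  with sub have "ball_verts G z d \<subset> ball_verts G z (Suc d)"
    by blast
  then have "card (ball_verts G z d) < card (ball_verts G z (Suc d))"
    by (rule psubset_card_mono[OF Suc.prems(2)])
  moreover have "finite (ball_verts G z d)"
    using Suc.prems(2) sub by (rule finite_subset[rotated])
  then have "Suc d \<le> card (ball_verts G z d)"
    by (rule Suc.IH[OF far])
  ultimately show ?case by simp
qed

lemma reach_within_card_verts:
  assumes "wf_graph G" "finite (verts G)" "u \<in> verts G" "v \<in> verts G"
  shows "reach_within G u v (card (verts G) - 1)"
proof (rule ccontr)
  let ?d = "card (verts G) - 1"
  assume far: "\<not> reach_within G u v ?d"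
  obtain m where "reach_within G u v m"
    using assms(1,3,4) unfolding wf_graph_def by blast
  have fin: "finite (ball_verts G u ?d)"
    using assms(2) ball_verts_subset by (rule finite_subset[rotated])
  have "v \<notin> ball_verts G u ?d"
    using far by (simp add: ball_verts_def)
  then have "ball_verts G u ?d \<subset> verts G"
    using ball_verts_subset[of G u ?d] assms(4) by blast
  then have "card (ball_verts G u ?d) < card (verts G)"
    by (rule psubset_card_mono[OF assms(2)])
  moreover have "Suc ?d \<le> card (ball_verts G u ?d)"
    using card_ball_verts_ge[OF \<open>reach_within G u v m\<close> far fin] .
  ultimately show False by linarith
qed

section \<open>Coverings and fibres\<close>

lemma finite_ball_verts_covering:
  assumes "covering K H \<delta>" "finite (verts H)"
  shows "finite (ball_verts K z0 n)"
proof (induction n)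
  case 0
  have "ball_verts K z0 0 \<subseteq> {z0}"
    unfolding ball_verts_def by (auto dest: reach_within_0)
  then show ?case by (rule finite_subset) simp
next
  case (Suc n)
  have "ball_verts K z0 (Suc n) \<subseteq> (\<Union>x\<in>ball_verts K z0 n. ball_verts K x 1)"
  proof
    fix w assume "w \<in> ball_verts K z0 (Suc n)"
    then have w: "reach_within K z0 w (Suc n)"
      by (simp add: ball_verts_def)
    then obtain x where "reach_within K z0 x n" "w = x \<or> adj K x w"
      by (rule reach_within_SucE)
    moreover have "w \<in> verts K"
      using reach_within_verts[OF w] by simp
    ultimately show "w \<in> (\<Union>x\<in>ball_verts K z0 n. ball_verts K x 1)"
      unfolding ball_verts_def by (auto simp: reach_within_1_iff dest: reach_within_verts)
  qed
  moreover have "finite (ball_verts K x 1)" if "x \<in> verts K" for x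
  proof -
    have "bij_betw \<delta> (ball_verts K x 1) (ball_verts H (\<delta> x) 1)"
      using assms(1) that unfolding covering_def by blast
    moreover have "finite (ball_verts H (\<delta> x) 1)"
      using assms(2) ball_verts_subset by (rule finite_subset[rotated])
    ultimately show ?thesis by (simp add: bij_betw_finite)
  qed
  then have "finite (\<Union>x\<in>ball_verts K z0 n. ball_verts K x 1)"
    by (rule finite_UN_I[OF Suc.IH]) (use ball_verts_subset[of K z0 n] in blast)
  ultimately show ?case by (rule finite_subset)
qed

lemma wf_graph_adjD:
  assumes "wf_graph G" "adj G x y"
  shows "x \<in> verts G" "y \<in> verts G" "adj G y x" "x \<noteq> y"
  using assms unfolding wf_graph_def by metis+

lemma covering_lift_adj:
  assumes "covering K H \<delta>" "wf_graph H" "x \<in> verts K" "adj H (\<delta> x) b"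
  obtains y where "adj K x y" "\<delta> y = b"
proof -
  have bij: "bij_betw \<delta> (ball_verts K x 1) (ball_verts H (\<delta> x) 1)"
    using assms(1,3) unfolding covering_def by blast
  have "\<delta> x \<in> verts H" "b \<in> verts H" "b \<noteq> \<delta> x"
    using wf_graph_adjD[OF assms(2,4)] by auto
  then have "b \<in> ball_verts H (\<delta> x) 1"
    using assms(4) by (simp add: ball_verts_def reach_within_1_iff)
  then obtain y where y: "y \<in> ball_verts K x 1" "\<delta> y = b"
    using bij unfolding bij_betw_def by (metis imageE)
  with \<open>b \<noteq> \<delta> x\<close> have "adj K x y"
    by (auto simp: ball_verts_def reach_within_1_iff)
  then show ?thesis using y(2) by (rule that)
qed

lemma covering_adj_inj:
  assumes "covering K H \<delta>" "wf_graph K" "adj K y x" "adj K y x'" "\<delta> x = \<delta> x'"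
  shows "x = x'"
proof -
  have "y \<in> verts K" "x \<in> ball_verts K y 1" "x' \<in> ball_verts K y 1"
    using assms(3,4) wf_graph_adjD[OF assms(2,3)] wf_graph_adjD[OF assms(2,4)]
    by (auto simp: ball_verts_def reach_within_1_iff)
  moreover have "inj_on \<delta> (ball_verts K y 1)"
    using assms(1) \<open>y \<in> verts K\<close> unfolding covering_def bij_betw_def by blast
  ultimately show ?thesis
    using assms(5) by (meson inj_onD)
qed

definition ball_fibre :: "('b, 'l) lgraph \<Rightarrow> ('b \<Rightarrow> 'c) \<Rightarrow> 'b \<Rightarrow> nat \<Rightarrow> 'c \<Rightarrow> 'b set" where
  "ball_fibre K \<delta> z0 n v = {w \<in> ball_verts K z0 n. \<delta> w = v}"

lemma finite_ball_fibre:
  "covering K H \<delta> \<Longrightarrow> finite (verts H) \<Longrightarrow> finite (ball_fibre K \<delta> z0 n v)"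
  unfolding ball_fibre_def using finite_ball_verts_covering[of K H \<delta> z0 n] by simp

lemma card_ball_fibre_mono:
  assumes "covering K H \<delta>" "finite (verts H)" "m \<le> n"
  shows "card (ball_fibre K \<delta> z0 m v) \<le> card (ball_fibre K \<delta> z0 n v)"
  using ball_verts_mono[OF assms(3), of K z0]
  by (intro card_mono[OF finite_ball_fibre[OF assms(1,2)]]) (auto simp: ball_fibre_def)

text \<open>Lifting the edge ab of H at each vertex of the fibre over a gives an injection, by the
  local injectivity of the covering at the lifted endpoint.\<close>
lemma card_ball_fibre_adj:
  assumes cov: "covering K H \<delta>" and fin: "finite (verts H)"
    and "wf_graph K" "wf_graph H" "adj H a b"
  shows "card (ball_fibre K \<delta> z0 n a) \<le> card (ball_fibre K \<delta> z0 (Suc n) b)"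
proof -
  define lift where "lift x = (SOME y. adj K x y \<and> \<delta> y = b)" for x
  have lift: "adj K x (lift x) \<and> \<delta> (lift x) = b" if "x \<in> ball_fibre K \<delta> z0 n a" for x
  proof -
    have "x \<in> verts K" "\<delta> x = a"
      using that ball_verts_subset[of K z0 n] by (auto simp: ball_fibre_def)
    then obtain y where "adj K x y" "\<delta> y = b"
      using covering_lift_adj[OF cov \<open>wf_graph H\<close>] \<open>adj H a b\<close> by metis
    then show ?thesis
      unfolding lift_def by (rule someI[where P = "\<lambda>y. adj K x y \<and> \<delta> y = b", OF conjI])
  qed
  have "inj_on lift (ball_fibre K \<delta> z0 n a)"
  proof (rule inj_onI)
    fix x x' assume x: "x \<in> ball_fibre K \<delta> z0 n a" and x': "x' \<in> ball_fibre K \<delta> z0 n a"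
      and eq: "lift x = lift x'"
    have "adj K (lift x) x" "adj K (lift x) x'"
      using lift[OF x] lift[OF x'] eq wf_graph_adjD(3)[OF \<open>wf_graph K\<close>] by auto
    moreover have "\<delta> x = \<delta> x'"
      using x x' by (simp add: ball_fibre_def)
    ultimately show "x = x'"
      by (rule covering_adj_inj[OF cov \<open>wf_graph K\<close>])
  qed
  moreover have "lift ` ball_fibre K \<delta> z0 n a \<subseteq> ball_fibre K \<delta> z0 (Suc n) b"
  proof
    fix w assume "w \<in> lift ` ball_fibre K \<delta> z0 n a"
    then obtain x where x: "x \<in> ball_fibre K \<delta> z0 n a" and w: "w = lift x"
      by blast
    have "reach_within K z0 x n"
      using x by (simp add: ball_fibre_def ball_verts_def)
    moreover have "reach_within K x w 1"
      using lift[OF x] wf_graph_adjD(1,2)[OF \<open>wf_graph K\<close>, of x "lift x"] w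
      by (simp add: reach_within_1_iff)
    ultimately have "reach_within K z0 w (Suc n)"
      using reach_within_trans by fastforce
    then show "w \<in> ball_fibre K \<delta> z0 (Suc n) b"
      using lift[OF x] w by (simp add: ball_fibre_def ball_verts_def)
  qed
  ultimately show ?thesis
    by (rule card_inj_on_le[OF _ _ finite_ball_fibre[OF cov fin]])
qed

lemma card_ball_fibre_reach_within:
  assumes "covering K H \<delta>" "finite (verts H)" "wf_graph K" "wf_graph H"
    and "reach_within H a b d"
  shows "card (ball_fibre K \<delta> z0 n a) \<le> card (ball_fibre K \<delta> z0 (n + d) b)"
  using assms(5)
proof (induction d arbitrary: b)
  case 0
  then have "b = a" by (rule reach_within_0)
  then show ?case by simp
next
  case (Suc d)
  obtain x where x: "reach_within H a x d" "b = x \<or> adj H x b"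
    using Suc.prems by (rule reach_within_SucE)
  have "card (ball_fibre K \<delta> z0 n a) \<le> card (ball_fibre K \<delta> z0 (n + d) x)"
    using Suc.IH[OF x(1)] .
  also have "\<dots> \<le> card (ball_fibre K \<delta> z0 (n + Suc d) b)"
  proof (cases "b = x")
    case True
    then show ?thesis by (simp add: card_ball_fibre_mono[OF assms(1,2)])
  next
    case False
    then show ?thesis using x(2) by (simp add: card_ball_fibre_adj[OF assms(1-4)])
  qed
  finally show ?case .
qed

lemma ex_card_ball_fibre_ge:
  assumes "covering K H \<delta>" "finite (verts H)" "verts H \<noteq> {}"
  obtains u where "u \<in> verts H"
    "card (ball_verts K z0 n) \<le> card (verts H) * card (ball_fibre K \<delta> z0 n u)"
proof -
  define c where "c u = card (ball_fibre K \<delta> z0 n u)" for u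
  have "Max (c ` verts H) \<in> c ` verts H"
    using assms(2,3) by (intro Max_in) auto
  then obtain u where u: "u \<in> verts H" "c u = Max (c ` verts H)"
    by (metis imageE)
  have "ball_verts K z0 n \<subseteq> (\<Union>v\<in>verts H. ball_fibre K \<delta> z0 n v)"
    using assms(1) ball_verts_subset[of K z0 n] unfolding covering_def ball_fibre_def by blast
  then have "card (ball_verts K z0 n) \<le> card (\<Union>v\<in>verts H. ball_fibre K \<delta> z0 n v)"
    using assms(1,2) finite_ball_fibre by (intro card_mono) auto
  also have "\<dots> \<le> (\<Sum>v\<in>verts H. c v)"
    unfolding c_def using assms(2) by (rule card_UN_le)
  also have "\<dots> \<le> card (verts H) * c u"
    using sum_bounded_above[of "verts H" c "c u"] u(2) assms(2) by simp
  finally show ?thesis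
    using that u(1) unfolding c_def by blast
qed

section \<open>Quasi-coverings\<close>

lemma reach_within_graph_iso_ball:
  assumes iso: "graph_iso \<phi> (ball G z r) (ball K z0 r)" and "\<phi> z = z0" "z0 \<in> verts K"
    and "s \<le> r" "reach_within G z w s"
  shows "reach_within K z0 (\<phi> w) s"
  using assms(4,5)
proof (induction s arbitrary: w)
  case 0
  then show ?case
    using assms(2,3) reach_within_0 reach_within_refl by metis
next
  case (Suc s)
  obtain p where p: "reach_within G z p s" "w = p \<or> adj G p w"
    using Suc.prems(2) by (rule reach_within_SucE)
  have IH: "reach_within K z0 (\<phi> p) s"
    using Suc.IH[OF _ p(1)] Suc.prems(1) by simp
  have in_ball: "p \<in> ball_verts G z r" "w \<in> ball_verts G z r"
    using Suc.prems p(1) reach_within_mono unfolding ball_verts_def by fastforce+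
  have "reach_within K (\<phi> p) (\<phi> w) 1"
  proof (cases "w = p")
    case True
    then show ?thesis using reach_within_verts[OF IH] by (simp add: reach_within_refl)
  next
    case False
    with p(2) have "adj (ball K z0 r) (\<phi> p) (\<phi> w)"
      using iso in_ball unfolding graph_iso_def by (simp add: ball_def)
    moreover have "\<phi> p \<in> verts K" "\<phi> w \<in> verts K"
      using iso in_ball ball_verts_subset[of K z0 r]
      unfolding graph_iso_def bij_betw_def by (auto simp: ball_def)
    ultimately show ?thesis by (simp add: ball_def reach_within_1_iff)
  qed
  from reach_within_trans[OF IH this] show ?case
    by simp
qed

lemma strict_qc_far_vertex:
  assumes "wf_graph G" "strict_qc G z r"
  obtains x where "x \<in> verts G" "\<not> reach_within G z x (r - 1)"
proof (rule ccontr)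
  assume "\<not> thesis"
  with that have "verts G \<subseteq> ball_verts G z (r - 1)"
    unfolding ball_verts_def by blast
  then have "ball_verts G z (r - 1) = verts G"
    using ball_verts_subset by (rule subset_antisym[rotated])
  then have "ball G z (r - 1) = G"
    unfolding ball_def using wf_graph_adjD(1,2)[OF assms(1)]
    by (intro lgraph.equality) (auto simp: fun_eq_iff)
  with assms(2) show False
    unfolding strict_qc_def by simp
qed

lemma card_ball_verts_strict_qc:
  assumes qc: "quasi_covering G H r \<gamma> K \<delta> z z0 \<phi>" and "strict_qc G z r" "n < r"
  shows "Suc n \<le> card (ball_verts K z0 n)"
proof -
  have wf: "wf_graph G" and z: "z \<in> verts G" and z0: "z0 \<in> verts K"
    and iso: "graph_iso \<phi> (ball G z r) (ball K z0 r)" and "\<phi> z = z0"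
    and cov: "covering K H \<delta>" and fin: "finite (verts H)"
    using qc unfolding quasi_covering_def by auto
  obtain x where x: "x \<in> verts G" "\<not> reach_within G z x (r - 1)"
    using strict_qc_far_vertex[OF wf assms(2)] .
  obtain m where "reach_within G z x m"
    using wf z x(1) unfolding wf_graph_def by blast
  have "n \<le> r - 1"
    using assms(3) by simp
  then have far: "\<not> reach_within G z x n"
    using x(2) reach_within_mono[of G z x n "r - 1"] by blast
  have "inj_on \<phi> (ball_verts G z r)"
    using iso unfolding graph_iso_def bij_betw_def by (simp add: ball_def)
  then have inj: "inj_on \<phi> (ball_verts G z n)"
    using ball_verts_mono[of n r G z] assms(3) inj_on_subset by auto
  have image: "\<phi> ` ball_verts G z n \<subseteq> ball_verts K z0 n"
    using reach_within_graph_iso_ball[OF iso \<open>\<phi> z = z0\<close> z0] assms(3)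
    unfolding ball_verts_def by auto
  have finK: "finite (ball_verts K z0 n)"
    using finite_ball_verts_covering[OF cov fin] .
  then have "finite (ball_verts G z n)"
    using finite_subset[OF image] inj by (blast dest: finite_imageD)
  then have "Suc n \<le> card (ball_verts G z n)"
    by (rule card_ball_verts_ge[OF \<open>reach_within G z x m\<close> far])
  also have "\<dots> \<le> card (ball_verts K z0 n)"
    using card_inj_on_le[OF inj image finK] .
  finally show ?thesis .
qed

lemma ball_fibre_subset_sheets:
  assumes "1 \<le> r"
  shows "ball_fibre K \<delta> z0 (r - 1) v
    \<subseteq> {w \<in> verts K. \<delta> w = v \<and> ball_verts K w 1 \<subseteq> ball_verts K z0 r}"
proof
  fix w assume "w \<in> ball_fibre K \<delta> z0 (r - 1) v"
  then have w: "reach_within K z0 w (r - 1)" "\<delta> w = v"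
    by (auto simp: ball_fibre_def ball_verts_def)
  have "ball_verts K w 1 \<subseteq> ball_verts K z0 r"
    using reach_within_trans[OF w(1), of _ 1] assms unfolding ball_verts_def by auto
  then show "w \<in> {w \<in> verts K. \<delta> w = v \<and> ball_verts K w 1 \<subseteq> ball_verts K z0 r}"
    using w reach_within_verts[OF w(1)] by blast
qed

lemma num_sheets_ge:
  assumes cov: "covering K H \<delta>" and fin: "finite (verts H)" and "verts H \<noteq> {}" "1 \<le> r"
    and fibres: "\<And>v. v \<in> verts H \<Longrightarrow> q \<le> card (ball_fibre K \<delta> z0 (r - 1) v)"
  shows "q \<le> num_sheets K H \<delta> z0 r"
proof -
  have "q \<le> card {w \<in> verts K. \<delta> w = v \<and> ball_verts K w 1 \<subseteq> ball_verts K z0 r}"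
    if "v \<in> verts H" for v
  proof -
    have "{w \<in> verts K. \<delta> w = v \<and> ball_verts K w 1 \<subseteq> ball_verts K z0 r} \<subseteq> ball_verts K z0 r"
      using center_in_ball_verts[of _ K] by blast
    then have "finite {w \<in> verts K. \<delta> w = v \<and> ball_verts K w 1 \<subseteq> ball_verts K z0 r}"
      using finite_ball_verts_covering[OF cov fin] finite_subset by blast
    then show ?thesis
      using fibres[OF that] card_mono[OF _ ball_fibre_subset_sheets[OF \<open>1 \<le> r\<close>]] by fastforce
  qed
  then show ?thesis
    unfolding num_sheets_def using fin \<open>verts H \<noteq> {}\<close> by (subst Min_ge_iff) auto
qed

theorem mainTheorem13:
  fixes G :: "('a, 'l) lgraph" and H :: "('c, 'l) lgraph" and K :: "('b, 'l) lgraph"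
    and \<gamma> :: "'a \<Rightarrow> 'c option" and \<delta> :: "'b \<Rightarrow> 'c" and \<phi> :: "'a \<Rightarrow> 'b"
    and z :: 'a and z0 :: 'b and r q :: nat
  assumes "quasi_covering G H r \<gamma> K \<delta> z z0 \<phi>"
    and "strict_qc G z r"
    and "r \<ge> q * card (verts H)"
  shows "q \<le> num_sheets K H \<delta> z0 r"
proof (cases "q = 0")
  case False
  have wH: "wf_graph H" and wK: "wf_graph K" and fin: "finite (verts H)"
    and cov: "covering K H \<delta>"
    using assms(1) unfolding quasi_covering_def by auto
  define n where "n = card (verts H)"
  have "verts H \<noteq> {}"
    using wH unfolding wf_graph_def by blast
  then have "1 \<le> n"
    using fin unfolding n_def by (simp add: Suc_le_eq card_gt_0_iff)
  have "n \<le> q * n"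
    using False by simp
  with assms(3) have "n \<le> r"
    unfolding n_def by linarith
  obtain u where u: "u \<in> verts H"
    "card (ball_verts K z0 (r - n)) \<le> n * card (ball_fibre K \<delta> z0 (r - n) u)"
    using ex_card_ball_fibre_ge[OF cov fin \<open>verts H \<noteq> {}\<close>] unfolding n_def by blast
  have "q \<le> card (ball_fibre K \<delta> z0 (r - 1) v)" if v: "v \<in> verts H" for v
  proof -
    let ?c = "card (ball_fibre K \<delta> z0 (r - 1) v)"
    have "Suc (r - n) \<le> card (ball_verts K z0 (r - n))"
      using card_ball_verts_strict_qc[OF assms(1,2)] \<open>1 \<le> n\<close> \<open>n \<le> r\<close> by simp
    also have "\<dots> \<le> n * card (ball_fibre K \<delta> z0 (r - n) u)"
      by (fact u(2))
    also have "\<dots> \<le> n * card (ball_fibre K \<delta> z0 (r - n + (n - 1)) v)"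
      using card_ball_fibre_reach_within[OF cov fin wK wH reach_within_card_verts[OF wH fin u(1) v]]
      unfolding n_def by (rule mult_le_mono2)
    also have "r - n + (n - 1) = r - 1"
      using \<open>1 \<le> n\<close> \<open>n \<le> r\<close> by simp
    finally have "q * n < (?c + 1) * n"
      using assms(3) \<open>n \<le> r\<close> unfolding n_def[symmetric] by (simp add: algebra_simps)
    then have "q < ?c + 1"
      unfolding mult_less_cancel2 ..
    then show ?thesis
      by simp
  qed
  then show ?thesis
    using num_sheets_ge[OF cov fin \<open>verts H \<noteq> {}\<close>] \<open>1 \<le> n\<close> \<open>n \<le> r\<close> by auto
qed simp

end
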